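(* Assume the tolerances $\varepsilon,\varepsilon_1,\varepsilon_2$ satisfy the same conditions as in the near-optimal recovery theorem, namely $mM\Lambda\varepsilon_2<1$ and $\varepsilon_1+mM\Lambda_s\varepsilon_2+(C_0+\varepsilon_2)(mM\Lambda\varepsilon_1+m(\Lambda_s+\Lambda\varepsilon_1)\delta)\le\varepsilon$ with $\delta:=\frac{M^2}{1-mM\Lambda\varepsilon_2}m\Lambda\varepsilon_2$. Let $u\in K$, $w=\lambda(u)$, and suppose the algorithm is run on noisy observations $\tilde w=w+\eta$ with $\|\eta\|\le\kappa$ (i.e. in step (1) one sets $\hat w:=\tilde w-\lambda(\hat u_0)$). Then the output $\hat u$ satisfies $$\|u-\hat u\|_{H^1(\Omega)}\le R(K_w)_{H^1(\Omega)}+\varepsilon+C\kappa,\qquad C:=(M+\delta)m(C_0+\varepsilon_2).$$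
   Context: Same setting as the near-optimal recovery theorem: $\Omega\subset\mathbb{R}^d$ ($d=2,3$) bounded Lipschitz, $\Gamma=\partial\Omega$, $s>1/2$, $\mathcal H^s(\Omega)$ the harmonic functions in $H^1(\Omega)$ with trace in $H^s(\Gamma)$ normed by $\|v_\Gamma\|_{H^s(\Gamma)}$, $\|v\|_{H^1}\le C_s\|v\|_{\mathcal H^s}$; $K=\{u: -\Delta u=f,\ u_\Gamma\in H^s(\Gamma),\ \|u_\Gamma\|_{H^s(\Gamma)}\le 1\}$ with $f\in H^{-1}(\Omega)$; $u_0$ solves $-\Delta u_0=f$, $u_0|_\Gamma=0$; $\lambda_1,\dots,\lambda_m$ continuous on $H^1(\Omega)$ with bound $\Lambda$ and linearly independent on $\mathcal H^s(\Omega)$; $\Lambda_s=C_s\Lambda$; $\phi_j$ their Riesz representers in $\mathcal H^s(\Omega)$; $G=(\lambda_j(\phi_i))$, $M=\|G^{-1}\|_{\ell_1\to\ell_1}$, $C_0=\max_j\|\phi_j\|_{H^1}$; $K_w=\{u\in K:\lambda(u)=w\}$, $R(K_w)_{H^1(\Omega)}$ its Chebyshev radius in $H^1(\Omega)$; $\|z\|=(\frac1m\sum z_j^2)^{1/2}$ on $\mathbb{R}^m$. Algorithm: $\hat u_0\in H^1$ with $\|u_0-\hat u_0\|_{H^1}\le\varepsilon_1$; $\hat\phi_j\in H^1$ with $\|\phi_j-\hat\phi_j\|_{H^1}\le\varepsilon_2$; $\hat G=(\lambda_j(\hat\phi_i))$; $\hat G\hat a=\hat w$; $\hat u=\hat u_0+\sum_j\hat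 a_j\hat\phi_j$. *)

theory Defs
  imports "HOL-Analysis.Analysis"
begin

text \<open>The type 'a plays the role of H^1(Omega)
 (its norm is the H^1 norm); L is the (linear) operator v |-> -Delta v with values in
 a space 'b (H^{-1}(Omega)); tr is the (linear) trace map to a space 'c of boundary
 functions; HsG is the subspace H^s(Gamma) of 'c, with inner product ipS whose
 induced norm is the H^s(Gamma) norm.\<close>

definition Hs_norm :: "('c \<Rightarrow> 'c \<Rightarrow> real) \<Rightarrow> 'c \<Rightarrow> real" where
  "Hs_norm ipS g = sqrt (ipS g g)"

definition harm_space :: "('a \<Rightarrow> 'b::zero) \<Rightarrow> ('a \<Rightarrow> 'c) \<Rightarrow> 'c set \<Rightarrow> 'a set" where
  "harm_space L tr HsG = {v. L v = 0 \<and> tr v \<in> HsG}"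

definition model_class ::
  "('a \<Rightarrow> 'b) \<Rightarrow> ('a \<Rightarrow> 'c) \<Rightarrow> 'c set \<Rightarrow> ('c \<Rightarrow> 'c \<Rightarrow> real) \<Rightarrow> 'b \<Rightarrow> 'a set" where
  "model_class L tr HsG ipS f = {u. L u = f \<and> tr u \<in> HsG \<and> Hs_norm ipS (tr u) \<le> 1}"

definition cheb_radius :: "'a::real_normed_vector set \<Rightarrow> real" where
  "cheb_radius S = (INF c. SUP u\<in>S. norm (u - c))"

definition meas :: "('m::finite \<Rightarrow> 'a \<Rightarrow> real) \<Rightarrow> 'a \<Rightarrow> real^'m" where
  "meas lam v = (\<chi> j. lam j v)"

definition rms_norm :: "real^'m::finite \<Rightarrow> real" where
  "rms_norm z = sqrt ((1 / real CARD('m)) * (\<Sum>j\<in>UNIV. (z $ j)\<^sup>2))"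

definition l1_norm :: "real^'m::finite \<Rightarrow> real" where
  "l1_norm z = (\<Sum>j\<in>UNIV. \<bar>z $ j\<bar>)"

definition l1_opnorm :: "real^'m::finite^'m \<Rightarrow> real" where
  "l1_opnorm A = (SUP x\<in>{x. l1_norm x \<le> 1}. l1_norm (A *v x))"

text \<open>Gram-type matrix with entries (i,j) = lambda_i(psi_j), so that
 G *v a = lambda(sum_j a_j psi_j).\<close>
definition meas_matrix :: "('m::finite \<Rightarrow> 'a \<Rightarrow> real) \<Rightarrow> ('m \<Rightarrow> 'a) \<Rightarrow> real^'m^'m" where
  "meas_matrix lam psi = (\<chi> i j. lam i (psi j))"

end

theory Submission
  imports Defs
begin

text \<open>Compare the output with the ideal recovery u* = u0 + \<Sum>j a_j \<phi>_j, where a solves the Gram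
  system G a = \<lambda>(u) - \<lambda>(u0). Because the \<phi>_j are Riesz representers and u - u* has zero data,
  the traces of u* - u0 and u - u* are orthogonal in H^s(\<Gamma>); so the reflection 2u* - u lies in
  K_w as well, and since its distance to u is 2\<parallel>u - u*\<parallel>, we get \<parallel>u - u*\<parallel> \<le> R(K_w).
  The computed output differs from u* through the errors in u0, in the \<phi>_j and in the coefficients.
  If G' is the computed Gram matrix and a' the computed coefficients, the coefficient error
  d = a' - a solves G d = e - (G' - G) a', where e collects the error in \<lambda>(u0) and the noise.
  With q = m M \<Lambda> \<epsilon>2 < 1 this gives (1 - q)\<parallel>d\<parallel>_1 \<le> M\<parallel>e\<parallel>_1 + q\<parallel>a\<parallel>_1, i.e.
  \<parallel>d\<parallel>_1 \<le> (M + \<delta>)\<parallel>e\<parallel>_1 + \<delta>\<parallel>G a\<parallel>_1; this is where \<delta> and the noise factor come from.\<close>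

lemma l1_norm_nonneg: "0 \<le> l1_norm z"
  unfolding l1_norm_def by (simp add: sum_nonneg)

lemma l1_norm_triangle: "l1_norm (x + y) \<le> l1_norm x + l1_norm y"
  unfolding l1_norm_def by (simp add: sum.distrib[symmetric] sum_mono abs_triangle_ineq)

lemma l1_norm_triangle_diff: "l1_norm (x - y) \<le> l1_norm x + l1_norm y"
  unfolding l1_norm_def by (simp add: sum.distrib[symmetric] sum_mono abs_triangle_ineq4)

lemma l1_norm_scaleR: "l1_norm (c *\<^sub>R x) = \<bar>c\<bar> * l1_norm x"
  unfolding l1_norm_def by (simp add: abs_mult sum_distrib_left)

lemma l1_norm_eq_0_iff: "l1_norm x = 0 \<longleftrightarrow> x = 0"
  unfolding l1_norm_def by (simp add: vec_eq_iff sum_nonneg_eq_0_iff)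

lemma l1_norm_le_card_mult:
  assumes "\<And>j. \<bar>z $ j\<bar> \<le> B"
  shows "l1_norm (z::real^'m::finite) \<le> real CARD('m) * B"
  using sum_mono[of UNIV "\<lambda>j. \<bar>z $ j\<bar>" "\<lambda>_. B"] assms unfolding l1_norm_def by simp

lemma l1_norm_le_card_mult_rms_norm: "l1_norm (z::real^'m::finite) \<le> real CARD('m) * rms_norm z"
proof (rule power2_le_imp_le)
  have "(l1_norm z)\<^sup>2 \<le> real CARD('m) * (\<Sum>j\<in>UNIV. (z $ j)\<^sup>2)"
    using Cauchy_Schwarz_ineq_sum[where a="\<lambda>_. 1" and b="\<lambda>j. \<bar>z $ j\<bar>" and I=UNIV] unfolding l1_norm_def by simp
  also have "\<dots> = (real CARD('m) * rms_norm z)\<^sup>2"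
    unfolding rms_norm_def power_mult_distrib by (simp add: sum_nonneg power2_eq_square)
  finally show "(l1_norm z)\<^sup>2 \<le> (real CARD('m) * rms_norm z)\<^sup>2" .
  show "0 \<le> real CARD('m) * rms_norm z"
    unfolding rms_norm_def by (simp add: sum_nonneg)
qed

lemma l1_norm_matrix_vector_le:
  fixes A :: "real^'m::finite^'m"
  assumes "\<And>i j. \<bar>A $ i $ j\<bar> \<le> c"
  shows "l1_norm (A *v x) \<le> real CARD('m) * c * l1_norm x"
proof -
  have "\<bar>(A *v x) $ i\<bar> \<le> c * l1_norm x" for i
  proof -
    have "\<bar>(A *v x) $ i\<bar> = \<bar>\<Sum>j\<in>UNIV. A $ i $ j * x $ j\<bar>"
      by (simp add: matrix_vector_mult_def)
    also have "\<dots> \<le> (\<Sum>j\<in>UNIV. \<bar>A $ i $ j\<bar> * \<bar>x $ j\<bar>)"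
      using sum_abs[of "\<lambda>j. A $ i $ j * x $ j" UNIV] by (simp add: abs_mult)
    also have "\<dots> \<le> (\<Sum>j\<in>UNIV. c * \<bar>x $ j\<bar>)"
      by (intro sum_mono mult_right_mono assms) simp
    finally show ?thesis unfolding l1_norm_def by (simp add: sum_distrib_left)
  qed
  then show ?thesis
    using l1_norm_le_card_mult[of "A *v x" "c * l1_norm x"] by (simp add: mult.assoc)
qed

lemma l1_opnorm_bound:
  fixes A :: "real^'m::finite^'m"
  shows "l1_norm (A *v x) \<le> l1_opnorm A * l1_norm x"
    and "0 \<le> l1_opnorm A"
proof -
  define B where "B = (\<Sum>i\<in>UNIV. \<Sum>j\<in>UNIV. \<bar>A $ i $ j\<bar>)"
  have "\<bar>A $ i $ j\<bar> \<le> B" for i j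
    unfolding B_def using member_le_sum[of i UNIV "\<lambda>i. \<Sum>j\<in>UNIV. \<bar>A $ i $ j\<bar>"]
      member_le_sum[of j UNIV "\<lambda>j. \<bar>A $ i $ j\<bar>"] by (simp add: sum_nonneg)
  have "l1_norm (A *v y) \<le> real CARD('m) * B" if "l1_norm y \<le> 1" for y :: "real^'m"
  proof -
    have "l1_norm (A *v y) \<le> real CARD('m) * B * l1_norm y"
      by (rule l1_norm_matrix_vector_le) fact
    also have "\<dots> \<le> real CARD('m) * B"
      by (rule mult_left_le) (use that in \<open>auto simp: B_def sum_nonneg\<close>)
    finally show ?thesis .
  qed
  then have unit: "l1_norm (A *v y) \<le> l1_opnorm A" if "l1_norm y \<le> 1" for y :: "real^'m"
    unfolding l1_opnorm_def by (intro cSUP_upper bdd_aboveI2) (use that in auto)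
  show "0 \<le> l1_opnorm A"
    using unit[of 0] by (simp add: l1_norm_def)
  show "l1_norm (A *v x) \<le> l1_opnorm A * l1_norm x"
  proof (cases "x = 0")
    case False
    then have pos: "0 < l1_norm x"
      using l1_norm_nonneg l1_norm_eq_0_iff by (metis order_le_less)
    have "l1_norm (A *v ((1 / l1_norm x) *\<^sub>R x)) \<le> l1_opnorm A"
      using pos by (intro unit) (simp add: l1_norm_scaleR)
    then show ?thesis
      using pos by (simp add: matrix_vector_mult_scaleR l1_norm_scaleR field_simps)
  qed (simp add: l1_norm_def)
qed

lemma norm_sum_scaleR_le_l1_norm:
  fixes v :: "'m::finite \<Rightarrow> 'a::real_normed_vector"
  assumes "\<And>j. norm (v j) \<le> B"
  shows "norm (\<Sum>j\<in>UNIV. c $ j *\<^sub>R v j) \<le> B * l1_norm c"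
proof -
  have "norm (\<Sum>j\<in>UNIV. c $ j *\<^sub>R v j) \<le> (\<Sum>j\<in>UNIV. \<bar>c $ j\<bar> * norm (v j))"
    using norm_sum[of "\<lambda>j. c $ j *\<^sub>R v j" UNIV] by simp
  also have "\<dots> \<le> (\<Sum>j\<in>UNIV. B * \<bar>c $ j\<bar>)"
    by (intro sum_mono) (metis abs_ge_zero assms mult.commute mult_left_mono)
  finally show ?thesis
    unfolding l1_norm_def by (simp add: sum_distrib_left)
qed

lemma matrix_inv_cancel:
  fixes A :: "'a::field^'n^'n"
  assumes "invertible A"
  shows "A ** matrix_inv A = mat 1" and "matrix_inv A ** A = mat 1"
proof -
  have "A ** matrix_inv A = mat 1 \<and> matrix_inv A ** A = mat 1"
    using assms unfolding matrix_inv_def invertible_def by (rule someI_ex)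
  then show "A ** matrix_inv A = mat 1" and "matrix_inv A ** A = mat 1"
    by auto
qed

lemma matrix_inv_unique_solution:
  fixes A :: "'a::field^'n^'n"
  assumes "invertible A" and "A *v x = y"
  shows "x = matrix_inv A *v y"
  using matrix_inv_cancel(2)[OF assms(1)] assms(2)
  by (metis matrix_vector_mul_assoc matrix_vector_mul_lid)

lemma l1_norm_perturbed_solution_le:
  fixes G Gh :: "real^'m::finite^'m"
  assumes inv: "invertible G"
    and M_def: "M = l1_opnorm (matrix_inv G)"
    and entries: "\<And>i j. \<bar>Gh $ i $ j - G $ i $ j\<bar> \<le> \<beta>"
    and small: "real CARD('m) * M * \<beta> < 1"
    and \<delta>_def: "\<delta> = M\<^sup>2 / (1 - real CARD('m) * M * \<beta>) * real CARD('m) * \<beta>"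
    and exact: "G *v a = b"
    and perturbed: "Gh *v ahat = b + e"
  shows "l1_norm (ahat - a) \<le> (M + \<delta>) * l1_norm e + \<delta> * l1_norm b"
proof -
  define q where "q = real CARD('m) * M * \<beta>"
  define d where "d = ahat - a"
  have \<delta>_q: "(1 - q) * \<delta> = q * M"
    using small unfolding \<delta>_def q_def by (simp add: power2_eq_square)
  have M_nonneg: "0 \<le> M"
    unfolding M_def by (rule l1_opnorm_bound(2))
  have inv_bound: "l1_norm (matrix_inv G *v x) \<le> M * l1_norm x" for x
    unfolding M_def by (rule l1_opnorm_bound(1))
  have "G *v d = e - (Gh - G) *v ahat"
    using exact perturbed unfolding d_def
    by (simp add: matrix_vector_mult_diff_distrib matrix_vector_mult_diff_rdistrib)
  then have "l1_norm d \<le> M * l1_norm (e - (Gh - G) *v ahat)"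
    using matrix_inv_unique_solution[OF inv] inv_bound by metis
  also have "\<dots> \<le> M * (l1_norm e + real CARD('m) * \<beta> * l1_norm ahat)"
  proof (rule mult_left_mono[OF _ M_nonneg])
    have "l1_norm ((Gh - G) *v ahat) \<le> real CARD('m) * \<beta> * l1_norm ahat"
      by (rule l1_norm_matrix_vector_le) (simp add: entries)
    then show "l1_norm (e - (Gh - G) *v ahat) \<le> l1_norm e + real CARD('m) * \<beta> * l1_norm ahat"
      using l1_norm_triangle_diff[of e "(Gh - G) *v ahat"] by linarith
  qed
  also have "\<dots> \<le> M * (l1_norm e + real CARD('m) * \<beta> * (l1_norm a + l1_norm d))"
    using l1_norm_triangle[of a d] entries[of undefined undefined] M_nonneg
    unfolding d_def by (intro mult_left_mono add_left_mono) auto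
  finally have "(1 - q) * l1_norm d \<le> M * l1_norm e + q * l1_norm a"
    unfolding q_def by (simp add: algebra_simps)
  also have "\<dots> \<le> M * l1_norm e + q * (M * l1_norm b)"
    using matrix_inv_unique_solution[OF inv exact] inv_bound[of b] M_nonneg entries[of undefined undefined]
    unfolding q_def by (intro add_left_mono mult_left_mono) auto
  also have "\<dots> = (1 - q) * M * l1_norm e + ((1 - q) * \<delta>) * (l1_norm e + l1_norm b)"
    unfolding \<delta>_q by (simp add: algebra_simps)
  also have "\<dots> = (1 - q) * ((M + \<delta>) * l1_norm e + \<delta> * l1_norm b)"
    by (simp add: algebra_simps)
  finally show ?thesis
    using small unfolding d_def q_def by simp
qed

lemma norm_perturbed_expansion_le:
  fixes \<phi> \<phi>hat :: "'m::finite \<Rightarrow> 'a::real_normed_vector"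
  assumes "norm (u0 - u0hat) \<le> \<epsilon>1"
    and "\<And>j. norm (\<phi> j - \<phi>hat j) \<le> \<epsilon>2"
    and "\<And>j. norm (\<phi> j) \<le> C0"
  shows "norm ((u0hat + (\<Sum>j\<in>UNIV. ahat $ j *\<^sub>R \<phi>hat j)) - (u0 + (\<Sum>j\<in>UNIV. a $ j *\<^sub>R \<phi> j)))
           \<le> \<epsilon>1 + \<epsilon>2 * l1_norm a + (C0 + \<epsilon>2) * l1_norm (ahat - a)"
proof -
  define X where "X = (\<Sum>j\<in>UNIV. a $ j *\<^sub>R (\<phi> j - \<phi>hat j))"
  define Y where "Y = (\<Sum>j\<in>UNIV. (ahat - a) $ j *\<^sub>R \<phi>hat j)"
  have decomp: "(u0hat + (\<Sum>j\<in>UNIV. ahat $ j *\<^sub>R \<phi>hat j)) - (u0 + (\<Sum>j\<in>UNIV. a $ j *\<^sub>R \<phi> j))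
      = (u0hat - u0) - X + Y"
    unfolding X_def Y_def by (simp add: algebra_simps sum_subtractf[symmetric] sum.distrib[symmetric])
  have "norm X \<le> \<epsilon>2 * l1_norm a"
    unfolding X_def by (rule norm_sum_scaleR_le_l1_norm) (fact assms(2))
  moreover have "norm Y \<le> (C0 + \<epsilon>2) * l1_norm (ahat - a)"
  proof (unfold Y_def, rule norm_sum_scaleR_le_l1_norm)
    fix j
    show "norm (\<phi>hat j) \<le> C0 + \<epsilon>2"
      using norm_triangle_ineq4[of "\<phi> j" "\<phi> j - \<phi>hat j"] assms(2,3)[of j] by simp
  qed
  moreover have "norm (u0hat - u0) \<le> \<epsilon>1"
    using assms(1) by (simp add: norm_minus_commute)
  ultimately show ?thesis
    unfolding decomp using norm_triangle_ineq[of "(u0hat - u0) - X" Y] norm_triangle_ineq4[of "u0hat - u0" X]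
    by linarith
qed

lemma norm_perturbed_recovery_le:
  fixes G Gh :: "real^'m::finite^'m" and \<phi> \<phi>hat :: "'m \<Rightarrow> 'a::real_normed_vector"
  assumes inv: "invertible G"
    and M_def: "M = l1_opnorm (matrix_inv G)"
    and entries: "\<And>i j. \<bar>Gh $ i $ j - G $ i $ j\<bar> \<le> \<beta>"
    and small: "real CARD('m) * M * \<beta> < 1"
    and \<delta>_def: "\<delta> = M\<^sup>2 / (1 - real CARD('m) * M * \<beta>) * real CARD('m) * \<beta>"
    and exact: "G *v a = b"
    and perturbed: "Gh *v ahat = b + e"
    and l1_b: "l1_norm b \<le> B"
    and l1_e: "l1_norm e \<le> E"
    and u0hat: "norm (u0 - u0hat) \<le> \<epsilon>1"
    and \<phi>hat: "\<And>j. norm (\<phi> j - \<phi>hat j) \<le> \<epsilon>2"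
    and C0: "\<And>j. norm (\<phi> j) \<le> C0"
  shows "norm ((u0hat + (\<Sum>j\<in>UNIV. ahat $ j *\<^sub>R \<phi>hat j)) - (u0 + (\<Sum>j\<in>UNIV. a $ j *\<^sub>R \<phi> j)))
           \<le> \<epsilon>1 + \<epsilon>2 * (M * B) + (C0 + \<epsilon>2) * ((M + \<delta>) * E + \<delta> * B)"
proof -
  have \<epsilon>2_nonneg: "0 \<le> \<epsilon>2" and C0_nonneg: "0 \<le> C0" and \<beta>_nonneg: "0 \<le> \<beta>"
    using norm_ge_zero \<phi>hat[of undefined] C0[of undefined] abs_ge_zero entries[of undefined undefined]
    by (blast intro: order_trans)+
  have M_nonneg: "0 \<le> M"
    unfolding M_def by (rule l1_opnorm_bound(2))
  have \<delta>_nonneg: "0 \<le> \<delta>"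
    unfolding \<delta>_def using small \<beta>_nonneg by simp
  have "l1_norm a \<le> M * l1_norm b"
    unfolding matrix_inv_unique_solution[OF inv exact] M_def by (rule l1_opnorm_bound(1))
  then have a_bound: "\<epsilon>2 * l1_norm a \<le> \<epsilon>2 * (M * B)"
    using mult_left_mono[OF l1_b M_nonneg] \<epsilon>2_nonneg by (intro mult_left_mono) auto
  have "l1_norm (ahat - a) \<le> (M + \<delta>) * E + \<delta> * B"
    using l1_norm_perturbed_solution_le[OF inv M_def entries small \<delta>_def exact perturbed]
      mult_left_mono[OF l1_e, of "M + \<delta>"] mult_left_mono[OF l1_b \<delta>_nonneg] M_nonneg \<delta>_nonneg
    by linarith
  then have d_bound: "(C0 + \<epsilon>2) * l1_norm (ahat - a) \<le> (C0 + \<epsilon>2) * ((M + \<delta>) * E + \<delta> * B)"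
    using C0_nonneg \<epsilon>2_nonneg by (intro mult_left_mono) auto
  have "norm ((u0hat + (\<Sum>j\<in>UNIV. ahat $ j *\<^sub>R \<phi>hat j)) - (u0 + (\<Sum>j\<in>UNIV. a $ j *\<^sub>R \<phi> j)))
      \<le> \<epsilon>1 + \<epsilon>2 * l1_norm a + (C0 + \<epsilon>2) * l1_norm (ahat - a)"
    using u0hat \<phi>hat C0 by (rule norm_perturbed_expansion_le)
  then show ?thesis
    using a_bound d_bound by linarith
qed

lemma half_dist_le_cheb_radius:
  fixes S :: "'a::real_normed_vector set"
  assumes "bounded S" and "u \<in> S" and "v \<in> S"
  shows "norm (u - v) \<le> 2 * cheb_radius S"
proof -
  have "norm (u - v) / 2 \<le> (SUP x\<in>S. norm (x - c))" for c
  proof -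
    obtain r where "\<forall>x\<in>S. dist c x \<le> r"
      using assms(1) bounded_any_center by blast
    then have bdd: "bdd_above ((\<lambda>x. norm (x - c)) ` S)"
      by (intro bdd_aboveI2[where M=r]) (simp add: dist_norm norm_minus_commute)
    have "norm (u - v) \<le> norm (u - c) + norm (v - c)"
      using norm_triangle_ineq4[of "u - c" "v - c"] by simp
    also have "\<dots> \<le> 2 * (SUP x\<in>S. norm (x - c))"
      using cSUP_upper[OF assms(2) bdd] cSUP_upper[OF assms(3) bdd] by simp
    finally show ?thesis by simp
  qed
  then have "norm (u - v) / 2 \<le> cheb_radius S"
    unfolding cheb_radius_def by (intro cINF_greatest) auto
  then show ?thesis by simp
qed

lemma linear_meas: "(\<And>j. linear (lam j)) \<Longrightarrow> linear (meas lam)"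
  unfolding meas_def by (intro linearI) (simp_all add: vec_eq_iff linear_add linear_cmul)

lemma meas_sum_scaleR:
  assumes "\<And>i. linear (lam i)"
  shows "meas lam (\<Sum>j\<in>UNIV. c $ j *\<^sub>R x j) = meas_matrix lam x *v c"
  unfolding meas_def meas_matrix_def matrix_vector_mult_def
  using assms by (simp add: vec_eq_iff linear_sum linear_cmul o_def mult.commute)

lemma meas_add_sum_scaleR:
  assumes "\<And>i. linear (lam i)"
  shows "meas lam (u0 + (\<Sum>j\<in>UNIV. c $ j *\<^sub>R x j)) = meas lam u0 + meas_matrix lam x *v c"
  using linear_add[OF linear_meas[where lam=lam, OF assms]] meas_sum_scaleR[where lam=lam, OF assms] by simp

lemma l1_norm_meas_le:
  fixes lam :: "'m::finite \<Rightarrow> 'a::real_normed_vector \<Rightarrow> real"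
  assumes "\<And>j v. \<bar>lam j v\<bar> \<le> \<Lambda> * norm v"
  shows "l1_norm (meas lam v) \<le> real CARD('m) * \<Lambda> * norm v"
  using l1_norm_le_card_mult[of "meas lam v" "\<Lambda> * norm v"] assms
  by (simp add: meas_def mult.assoc)

lemma meas_matrix_perturbation_le:
  assumes "\<And>j. linear (lam j)" and "\<And>j v. \<bar>lam j v\<bar> \<le> \<Lambda> * norm v" and "0 \<le> \<Lambda>"
    and "\<And>j. norm (\<phi> j - \<phi>hat j) \<le> \<epsilon>2"
  shows "\<bar>meas_matrix lam \<phi>hat $ i $ j - meas_matrix lam \<phi> $ i $ j\<bar> \<le> \<Lambda> * \<epsilon>2"
proof -
  have "\<bar>meas_matrix lam \<phi>hat $ i $ j - meas_matrix lam \<phi> $ i $ j\<bar> = \<bar>lam i (\<phi>hat j - \<phi> j)\<bar>"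
    using assms(1)[of i] by (simp add: meas_matrix_def linear_diff)
  also have "\<dots> \<le> \<Lambda> * norm (\<phi> j - \<phi>hat j)"
    using assms(2)[of i "\<phi>hat j - \<phi> j"] by (simp add: norm_minus_commute)
  also have "\<dots> \<le> \<Lambda> * \<epsilon>2"
    by (rule mult_left_mono[OF assms(4) assms(3)])
  finally show ?thesis .
qed

lemma l1_norm_data_error_le:
  fixes lam :: "'m::finite \<Rightarrow> 'a::real_normed_vector \<Rightarrow> real"
  assumes "\<And>j v. \<bar>lam j v\<bar> \<le> \<Lambda> * norm v" and "0 \<le> \<Lambda>"
    and "norm x \<le> \<epsilon>1" and "rms_norm \<eta> \<le> \<kappa>"
  shows "l1_norm (meas lam x + \<eta>) \<le> real CARD('m) * \<Lambda> * \<epsilon>1 + real CARD('m) * \<kappa>"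
proof -
  have "l1_norm (meas lam x) \<le> real CARD('m) * \<Lambda> * norm x"
    by (rule l1_norm_meas_le) (fact assms(1))
  also have "\<dots> \<le> real CARD('m) * \<Lambda> * \<epsilon>1"
    by (rule mult_left_mono[OF assms(3)]) (simp add: assms(2))
  finally have "l1_norm (meas lam x) \<le> real CARD('m) * \<Lambda> * \<epsilon>1" .
  moreover have "l1_norm \<eta> \<le> real CARD('m) * \<kappa>"
    by (rule order_trans[OF l1_norm_le_card_mult_rms_norm]) (simp add: assms(4))
  ultimately show ?thesis
    using l1_norm_triangle[of "meas lam x" \<eta>] by linarith
qed

lemma subspace_harm_space:
  assumes "linear L" and "linear tr" and "subspace HsG"
  shows "subspace (harm_space L tr HsG)"
  using assms unfolding subspace_def harm_space_def
  by (auto simp: linear_0 linear_add linear_cmul)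

locale subspace_inner =
  fixes S :: "'c::real_vector set" and ip :: "'c \<Rightarrow> 'c \<Rightarrow> real"
  assumes subspace: "subspace S"
    and sym: "\<And>g h. g \<in> S \<Longrightarrow> h \<in> S \<Longrightarrow> ip g h = ip h g"
    and add_left: "\<And>g h k. g \<in> S \<Longrightarrow> h \<in> S \<Longrightarrow> k \<in> S \<Longrightarrow> ip (g + h) k = ip g k + ip h k"
    and scaleR_left: "\<And>c g h. g \<in> S \<Longrightarrow> h \<in> S \<Longrightarrow> ip (c *\<^sub>R g) h = c * ip g h"
    and pos: "\<And>g. g \<in> S \<Longrightarrow> g \<noteq> 0 \<Longrightarrow> 0 < ip g g"
begin

lemma zero_left: "k \<in> S \<Longrightarrow> ip 0 k = 0"
  using scaleR_left[of k k 0] by simp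

lemma self_eq_0_iff: "g \<in> S \<Longrightarrow> ip g g = 0 \<longleftrightarrow> g = 0"
  using pos zero_left by fastforce

lemma Hs_norm_nonneg: "g \<in> S \<Longrightarrow> 0 \<le> Hs_norm ip g"
  unfolding Hs_norm_def using pos[of g] zero_left[of g] by (cases "g = 0") auto

lemma sum_scaleR_left:
  assumes "finite I" and "\<And>j. j \<in> I \<Longrightarrow> x j \<in> S" and "k \<in> S"
  shows "ip (\<Sum>j\<in>I. c j *\<^sub>R x j) k = (\<Sum>j\<in>I. c j * ip (x j) k)"
  using assms(1,2)
proof (induction I rule: finite_induct)
  case empty
  then show ?case using zero_left[OF assms(3)] by simp
next
  case (insert i I)
  have "(\<Sum>j\<in>I. c j *\<^sub>R x j) \<in> S"
    using insert.prems subspace by (intro subspace_sum subspace_scale) auto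
  then show ?case
    using insert subspace add_left scaleR_left assms(3) by (simp add: subspace_scale)
qed

lemma self_add_scaleR:
  assumes g: "g \<in> S" and h: "h \<in> S"
  shows "ip (g + c *\<^sub>R h) (g + c *\<^sub>R h) = ip g g + 2 * c * ip g h + c\<^sup>2 * ip h h"
proof -
  have ch: "c *\<^sub>R h \<in> S" and gch: "g + c *\<^sub>R h \<in> S"
    using g h subspace by (simp_all add: subspace_scale subspace_add)
  have "ip (g + c *\<^sub>R h) (g + c *\<^sub>R h) = ip g (g + c *\<^sub>R h) + c * ip h (g + c *\<^sub>R h)"
    using add_left[OF g ch gch] scaleR_left[OF h gch] by simp
  also have "\<dots> = ip (g + c *\<^sub>R h) g + c * ip (g + c *\<^sub>R h) h"
    using sym[OF g gch] sym[OF h gch] by simp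
  also have "\<dots> = ip g g + 2 * c * ip g h + c\<^sup>2 * ip h h"
    using add_left[OF g ch g] add_left[OF g ch h] scaleR_left[OF h g] scaleR_left[OF h h] sym[OF g h]
    by (simp add: algebra_simps power2_eq_square)
  finally show ?thesis .
qed

lemma Hs_norm_diff_eq_add_if_orthogonal:
  assumes "g \<in> S" and "h \<in> S" and "ip g h = 0"
  shows "Hs_norm ip (g - h) = Hs_norm ip (g + h)"
  using self_add_scaleR[OF assms(1,2), of 1] self_add_scaleR[OF assms(1,2), of "-1"] assms(3)
  unfolding Hs_norm_def by simp

end

locale harmonic_recovery = subspace_inner HsG ipS
  for HsG :: "'c::real_vector set" and ipS :: "'c \<Rightarrow> 'c \<Rightarrow> real" +
  fixes L :: "'a::real_normed_vector \<Rightarrow> 'b::real_vector"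
    and tr :: "'a \<Rightarrow> 'c"
    and lam :: "'m::finite \<Rightarrow> 'a \<Rightarrow> real"
    and \<phi> :: "'m \<Rightarrow> 'a"
  assumes L_lin: "linear L"
    and tr_lin: "linear tr"
    and lam_lin: "\<And>j. linear (lam j)"
    and lam_indep: "\<And>c::real^'m. (\<forall>v\<in>harm_space L tr HsG. (\<Sum>j\<in>UNIV. c $ j * lam j v) = 0) \<Longrightarrow> c = 0"
    and \<phi>_mem: "\<And>j. \<phi> j \<in> harm_space L tr HsG"
    and \<phi>_riesz: "\<And>j v. v \<in> harm_space L tr HsG \<Longrightarrow> ipS (tr (\<phi> j)) (tr v) = lam j v"
begin

lemma trace_mem: "v \<in> harm_space L tr HsG \<Longrightarrow> tr v \<in> HsG"
  by (simp add: harm_space_def)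

lemma sum_basis_mem: "(\<Sum>j\<in>UNIV. c $ j *\<^sub>R \<phi> j) \<in> harm_space L tr HsG"
  using subspace_harm_space[OF L_lin tr_lin subspace] \<phi>_mem
  by (intro subspace_sum subspace_scale) auto

lemma diff_mem_harm_space:
  assumes "L v = f" and "L u0 = f" and "tr v \<in> HsG" and "tr u0 = 0"
  shows "v - u0 \<in> harm_space L tr HsG" and "tr (v - u0) = tr v"
  using assms L_lin tr_lin by (simp_all add: harm_space_def linear_diff)

lemma riesz_sum:
  assumes "v \<in> harm_space L tr HsG"
  shows "ipS (tr (\<Sum>j\<in>UNIV. c $ j *\<^sub>R \<phi> j)) (tr v) = (\<Sum>j\<in>UNIV. c $ j * lam j v)"
proof -
  have "tr (\<Sum>j\<in>UNIV. c $ j *\<^sub>R \<phi> j) = (\<Sum>j\<in>UNIV. c $ j *\<^sub>R tr (\<phi> j))"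
    using tr_lin by (simp add: linear_sum linear_cmul)
  then show ?thesis
    using sum_scaleR_left[of UNIV "\<lambda>j. tr (\<phi> j)" "tr v" "\<lambda>j. c $ j"] trace_mem \<phi>_mem \<phi>_riesz assms
    by simp
qed

lemma harm_space_nonzero: "\<exists>v\<in>harm_space L tr HsG. v \<noteq> 0"
proof (rule ccontr)
  assume "\<not> ?thesis"
  moreover have "lam j 0 = 0" for j
    using lam_lin linear_0 by blast
  ultimately have "(vec 1 :: real^'m) = 0"
    by (intro lam_indep) auto
  then show False by (simp add: vec_eq_iff)
qed

lemma gram_invertible: "invertible (meas_matrix lam \<phi>)"
proof -
  have "c = 0" if Gc: "meas_matrix lam \<phi> *v c = 0" for c :: "real^'m"
  proof (rule lam_indep, intro ballI)
    define \<psi> where "\<psi> = (\<Sum>j\<in>UNIV. c $ j *\<^sub>R \<phi> j)"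
    have \<psi>_mem: "\<psi> \<in> harm_space L tr HsG"
      unfolding \<psi>_def by (rule sum_basis_mem)
    have "lam j \<psi> = 0" for j
      using Gc meas_sum_scaleR[where lam=lam and c=c and x=\<phi>, OF lam_lin] unfolding \<psi>_def by (simp add: meas_def vec_eq_iff)
    then have "ipS (tr \<psi>) (tr \<psi>) = 0"
      using riesz_sum[OF \<psi>_mem, of c, folded \<psi>_def] by simp
    then have tr_\<psi>: "tr \<psi> = 0"
      using self_eq_0_iff trace_mem \<psi>_mem by blast
    fix v assume "v \<in> harm_space L tr HsG"
    then show "(\<Sum>j\<in>UNIV. c $ j * lam j v) = 0"
      using riesz_sum[of v c, folded \<psi>_def] zero_left trace_mem tr_\<psi> by simp
  qed
  then show ?thesis
    using matrix_left_invertible_ker invertible_left_inverse by blast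
qed

lemma lam_bound_nonneg:
  assumes "\<And>j v. \<bar>lam j v\<bar> \<le> \<Lambda> * norm v"
  shows "0 \<le> \<Lambda>"
proof -
  obtain v where "v \<in> harm_space L tr HsG" and "v \<noteq> 0"
    using harm_space_nonzero by blast
  moreover have "0 \<le> \<Lambda> * norm v"
    using assms[of undefined v] by linarith
  ultimately show ?thesis
    by (simp add: zero_le_mult_iff)
qed

lemma model_class_subset_cball:
  assumes Cs_bound: "\<And>v. v \<in> harm_space L tr HsG \<Longrightarrow> norm v \<le> Cs * Hs_norm ipS (tr v)"
    and u0: "L u0 = f" "tr u0 = 0"
  shows "model_class L tr HsG ipS f \<subseteq> cball u0 Cs"
proof
  obtain v1 where v1: "v1 \<in> harm_space L tr HsG" "v1 \<noteq> 0"
    using harm_space_nonzero by blast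
  then have "0 < Cs * Hs_norm ipS (tr v1)"
    using Cs_bound[of v1] zero_less_norm_iff[of v1] by linarith
  then have Cs_nonneg: "0 \<le> Cs"
    using Hs_norm_nonneg[OF trace_mem[OF v1(1)]] by (simp add: zero_less_mult_iff)
  fix v assume "v \<in> model_class L tr HsG ipS f"
  then have v: "L v = f" "tr v \<in> HsG" "Hs_norm ipS (tr v) \<le> 1"
    unfolding model_class_def by auto
  have "norm (v - u0) \<le> Cs * Hs_norm ipS (tr v)"
    using Cs_bound diff_mem_harm_space[OF v(1) u0(1) v(2) u0(2)] by metis
  also have "\<dots> \<le> Cs"
    using mult_left_mono[OF v(3) Cs_nonneg] by simp
  finally show "v \<in> cball u0 Cs"
    by (simp add: dist_norm norm_minus_commute)
qed

lemma l1_norm_meas_model_class_le: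
  assumes Cs_bound: "\<And>v. v \<in> harm_space L tr HsG \<Longrightarrow> norm v \<le> Cs * Hs_norm ipS (tr v)"
    and u0: "L u0 = f" "tr u0 = 0"
    and lam_bound: "\<And>j v. \<bar>lam j v\<bar> \<le> \<Lambda> * norm v"
    and u: "u \<in> model_class L tr HsG ipS f"
  shows "l1_norm (meas lam u - meas lam u0) \<le> real CARD('m) * (Cs * \<Lambda>)"
proof -
  have "meas lam u - meas lam u0 = meas lam (u - u0)"
    using linear_meas[where lam=lam, OF lam_lin] by (simp add: linear_diff)
  also have "l1_norm \<dots> \<le> real CARD('m) * \<Lambda> * norm (u - u0)"
    by (rule l1_norm_meas_le) (fact lam_bound)
  also have "\<dots> \<le> real CARD('m) * \<Lambda> * Cs"
    using model_class_subset_cball[OF Cs_bound u0] u lam_bound_nonneg[OF lam_bound]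
    by (intro mult_left_mono) (auto simp: dist_norm norm_minus_commute)
  finally show ?thesis
    by (simp add: ac_simps)
qed

lemma residual_trace_orthogonal:
  assumes u: "u \<in> model_class L tr HsG ipS f"
    and u0: "L u0 = f" "tr u0 = 0"
    and same_meas: "meas lam (u0 + (\<Sum>j\<in>UNIV. a $ j *\<^sub>R \<phi> j)) = meas lam u"
  shows "u - u0 - (\<Sum>j\<in>UNIV. a $ j *\<^sub>R \<phi> j) \<in> harm_space L tr HsG"
    and "ipS (tr (\<Sum>j\<in>UNIV. a $ j *\<^sub>R \<phi> j)) (tr (u - u0 - (\<Sum>j\<in>UNIV. a $ j *\<^sub>R \<phi> j))) = 0"
proof -
  define \<psi> where "\<psi> = (\<Sum>j\<in>UNIV. a $ j *\<^sub>R \<phi> j)"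
  have "u - u0 \<in> harm_space L tr HsG"
    using u u0 unfolding model_class_def by (intro diff_mem_harm_space(1)) auto
  then show res_mem: "u - u0 - \<psi> \<in> harm_space L tr HsG"
    using sum_basis_mem subspace_harm_space[OF L_lin tr_lin subspace]
    unfolding \<psi>_def by (simp add: subspace_diff)
  have "lam j (u - u0 - \<psi>) = 0" for j
  proof -
    have "lam j (u0 + \<psi>) = lam j u"
      using same_meas unfolding \<psi>_def meas_def by (simp add: vec_eq_iff)
    then show ?thesis
      using lam_lin[of j] by (simp add: linear_diff linear_add)
  qed
  then show "ipS (tr \<psi>) (tr (u - u0 - \<psi>)) = 0"
    using riesz_sum[OF res_mem, of a, folded \<psi>_def] by simp
qed

lemma reflection_mem_fibre:
  assumes u: "u \<in> model_class L tr HsG ipS f"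
    and u0: "L u0 = f" "tr u0 = 0"
    and same_meas: "meas lam (u0 + (\<Sum>j\<in>UNIV. a $ j *\<^sub>R \<phi> j)) = meas lam u"
  shows "2 *\<^sub>R (u0 + (\<Sum>j\<in>UNIV. a $ j *\<^sub>R \<phi> j)) - u
           \<in> {v \<in> model_class L tr HsG ipS f. meas lam v = meas lam u}"
proof -
  define \<psi> where "\<psi> = (\<Sum>j\<in>UNIV. a $ j *\<^sub>R \<phi> j)"
  define u' where "u' = 2 *\<^sub>R (u0 + \<psi>) - u"
  have uK: "L u = f" "Hs_norm ipS (tr u) \<le> 1"
    using u unfolding model_class_def by auto
  have \<psi>_mem: "\<psi> \<in> harm_space L tr HsG"
    unfolding \<psi>_def by (rule sum_basis_mem)
  note res_mem = residual_trace_orthogonal(1)[OF u u0 same_meas, folded \<psi>_def]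
  note orth = residual_trace_orthogonal(2)[OF u u0 same_meas, folded \<psi>_def]
  have tr_res: "tr (u - u0 - \<psi>) = tr u - tr \<psi>"
    using tr_lin u0(2) by (simp add: linear_diff)
  have tr_u: "tr u = tr \<psi> + tr (u - u0 - \<psi>)"
    unfolding tr_res by simp
  have "tr u' = 2 *\<^sub>R tr \<psi> - tr u"
    using tr_lin u0(2) unfolding u'_def by (simp add: linear_diff linear_add linear_cmul)
  then have tr_u': "tr u' = tr \<psi> - tr (u - u0 - \<psi>)"
    unfolding tr_res by (simp add: scaleR_2)
  have "L u' = 2 *\<^sub>R (L u0 + L \<psi>) - L u"
    using L_lin unfolding u'_def by (simp add: linear_diff linear_add linear_cmul)
  then have "L u' = f"
    using u0(1) uK(1) \<psi>_mem unfolding harm_space_def by (simp add: scaleR_2)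
  moreover have "tr u' \<in> HsG"
    unfolding tr_u' using subspace trace_mem[OF \<psi>_mem] trace_mem[OF res_mem] by (rule subspace_diff)
  moreover have "Hs_norm ipS (tr u') = Hs_norm ipS (tr u)"
    unfolding tr_u tr_u'
    by (rule Hs_norm_diff_eq_add_if_orthogonal[OF trace_mem[OF \<psi>_mem] trace_mem[OF res_mem] orth])
  moreover have "meas lam u' = meas lam u"
  proof -
    have "linear (meas lam)"
      by (rule linear_meas) (fact lam_lin)
    then have "meas lam u' = 2 *\<^sub>R meas lam (u0 + \<psi>) - meas lam u"
      unfolding u'_def by (simp add: linear_diff linear_cmul)
    then show ?thesis
      using same_meas unfolding \<psi>_def by (simp add: scaleR_2)
  qed
  ultimately show ?thesis
    using uK(2) unfolding u'_def \<psi>_def model_class_def by simp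
qed

lemma dist_le_cheb_radius:
  assumes Cs_bound: "\<And>v. v \<in> harm_space L tr HsG \<Longrightarrow> norm v \<le> Cs * Hs_norm ipS (tr v)"
    and u: "u \<in> model_class L tr HsG ipS f"
    and u0: "L u0 = f" "tr u0 = 0"
    and same_meas: "meas lam (u0 + (\<Sum>j\<in>UNIV. a $ j *\<^sub>R \<phi> j)) = meas lam u"
  shows "norm (u - (u0 + (\<Sum>j\<in>UNIV. a $ j *\<^sub>R \<phi> j)))
           \<le> cheb_radius {v \<in> model_class L tr HsG ipS f. meas lam v = meas lam u}"
proof -
  let ?ustar = "u0 + (\<Sum>j\<in>UNIV. a $ j *\<^sub>R \<phi> j)"
  let ?Kw = "{v \<in> model_class L tr HsG ipS f. meas lam v = meas lam u}"
  have "?Kw \<subseteq> cball u0 Cs"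
    using model_class_subset_cball[OF Cs_bound u0] by blast
  then have "bounded ?Kw"
    by (rule bounded_subset[OF bounded_cball])
  moreover have "u \<in> ?Kw"
    using u by blast
  ultimately have "norm (u - (2 *\<^sub>R ?ustar - u)) \<le> 2 * cheb_radius ?Kw"
    using reflection_mem_fibre[OF u u0 same_meas] by (rule half_dist_le_cheb_radius)
  moreover have "u - (2 *\<^sub>R x - u) = 2 *\<^sub>R (u - x)" for x :: 'a
    by (simp add: scaleR_2 algebra_simps)
  ultimately show ?thesis
    by simp
qed

lemma exists_optimal_recovery:
  assumes Cs_bound: "\<And>v. v \<in> harm_space L tr HsG \<Longrightarrow> norm v \<le> Cs * Hs_norm ipS (tr v)"
    and u0: "L u0 = f" "tr u0 = 0"
    and u: "u \<in> model_class L tr HsG ipS f"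
  obtains a where "meas_matrix lam \<phi> *v a = meas lam u - meas lam u0"
    and "norm (u - (u0 + (\<Sum>j\<in>UNIV. a $ j *\<^sub>R \<phi> j)))
           \<le> cheb_radius {v \<in> model_class L tr HsG ipS f. meas lam v = meas lam u}"
proof -
  define a where "a = matrix_inv (meas_matrix lam \<phi>) *v (meas lam u - meas lam u0)"
  have Ga: "meas_matrix lam \<phi> *v a = meas lam u - meas lam u0"
    using matrix_inv_cancel(1)[OF gram_invertible] unfolding a_def by (simp add: matrix_vector_mul_assoc)
  then have "meas lam (u0 + (\<Sum>j\<in>UNIV. a $ j *\<^sub>R \<phi> j)) = meas lam u"
    using meas_add_sum_scaleR[where lam=lam and c=a and x=\<phi>, OF lam_lin] by simp
  with Cs_bound u u0 have "norm (u - (u0 + (\<Sum>j\<in>UNIV. a $ j *\<^sub>R \<phi> j)))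
      \<le> cheb_radius {v \<in> model_class L tr HsG ipS f. meas lam v = meas lam u}"
    by (intro dist_le_cheb_radius)
  with Ga show ?thesis
    by (rule that)
qed

end

theorem mainTheorem2:
  fixes L :: "'a::real_normed_vector \<Rightarrow> 'b::real_vector"
    and tr :: "'a \<Rightarrow> 'c::real_vector"
    and HsG :: "'c set"
    and ipS :: "'c \<Rightarrow> 'c \<Rightarrow> real"
    and f :: 'b
    and Cs \<Lambda> \<Lambda>s C0 M \<delta> \<epsilon> \<epsilon>1 \<epsilon>2 \<kappa> :: real
    and lam :: "'m::finite \<Rightarrow> 'a \<Rightarrow> real"
    and \<phi> \<phi>hat :: "'m \<Rightarrow> 'a"
    and u0 u0hat u uhat :: 'a
    and \<eta> w wtilde what ahat :: "real^'m"
  assumes L_lin: "linear L"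
    and tr_lin: "linear tr"
    and HsG_sub: "subspace HsG"
    and ip_sym: "\<And>g h. g \<in> HsG \<Longrightarrow> h \<in> HsG \<Longrightarrow> ipS g h = ipS h g"
    and ip_add: "\<And>g h k. g \<in> HsG \<Longrightarrow> h \<in> HsG \<Longrightarrow> k \<in> HsG \<Longrightarrow> ipS (g + h) k = ipS g k + ipS h k"
    and ip_scale: "\<And>c g h. g \<in> HsG \<Longrightarrow> h \<in> HsG \<Longrightarrow> ipS (c *\<^sub>R g) h = c * ipS g h"
    and ip_pos: "\<And>g. g \<in> HsG \<Longrightarrow> g \<noteq> 0 \<Longrightarrow> ipS g g > 0"
    and Cs_bound: "\<And>v. v \<in> harm_space L tr HsG \<Longrightarrow> norm v \<le> Cs * Hs_norm ipS (tr v)"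
    and u0_def: "L u0 = f" "tr u0 = 0"
    and lam_lin: "\<And>j. linear (lam j)"
    and lam_bound: "\<And>j v. \<bar>lam j v\<bar> \<le> \<Lambda> * norm v"
    and lam_indep: "\<And>c::real^'m. (\<forall>v\<in>harm_space L tr HsG. (\<Sum>j\<in>UNIV. c $ j * lam j v) = 0) \<Longrightarrow> c = 0"
    and \<Lambda>s_def: "\<Lambda>s = Cs * \<Lambda>"
    and \<phi>_mem: "\<And>j. \<phi> j \<in> harm_space L tr HsG"
    and \<phi>_riesz: "\<And>j v. v \<in> harm_space L tr HsG \<Longrightarrow> ipS (tr (\<phi> j)) (tr v) = lam j v"
    and M_def: "M = l1_opnorm (matrix_inv (meas_matrix lam \<phi>))"
    and C0_def: "C0 = Max (range (\<lambda>j. norm (\<phi> j)))"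
    and u0hat_err: "norm (u0 - u0hat) \<le> \<epsilon>1"
    and \<phi>hat_err: "\<And>j. norm (\<phi> j - \<phi>hat j) \<le> \<epsilon>2"
    and tol1: "real CARD('m) * M * \<Lambda> * \<epsilon>2 < 1"
    and \<delta>_def: "\<delta> = M\<^sup>2 / (1 - real CARD('m) * M * \<Lambda> * \<epsilon>2) * real CARD('m) * \<Lambda> * \<epsilon>2"
    and tol2: "\<epsilon>1 + real CARD('m) * M * \<Lambda>s * \<epsilon>2
              + (C0 + \<epsilon>2) * (real CARD('m) * M * \<Lambda> * \<epsilon>1
                               + real CARD('m) * (\<Lambda>s + \<Lambda> * \<epsilon>1) * \<delta>) \<le> \<epsilon>"
    and u_in_K: "u \<in> model_class L tr HsG ipS f"
    and w_def: "w = meas lam u"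
    and noise: "wtilde = w + \<eta>" "rms_norm \<eta> \<le> \<kappa>"
    and what_def: "what = wtilde - meas lam u0hat"
    and ahat_solves: "meas_matrix lam \<phi>hat *v ahat = what"
    and uhat_def: "uhat = u0hat + (\<Sum>j\<in>UNIV. ahat $ j *\<^sub>R \<phi>hat j)"
  shows "norm (u - uhat)
           \<le> cheb_radius {v \<in> model_class L tr HsG ipS f. meas lam v = w}
              + \<epsilon> + (M + \<delta>) * real CARD('m) * (C0 + \<epsilon>2) * \<kappa>"
proof -
  interpret harmonic_recovery HsG ipS L tr lam \<phi>
    by (intro harmonic_recovery.intro subspace_inner.intro harmonic_recovery_axioms.intro)
      (fact HsG_sub ip_sym ip_add ip_scale ip_pos L_lin tr_lin lam_lin lam_indep \<phi>_mem \<phi>_riesz)+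
  let ?m = "real CARD('m)"
  define b where "b = meas lam u - meas lam u0"
  obtain a where Ga: "meas_matrix lam \<phi> *v a = b"
    and cheb: "norm (u - (u0 + (\<Sum>j\<in>UNIV. a $ j *\<^sub>R \<phi> j)))
                 \<le> cheb_radius {v \<in> model_class L tr HsG ipS f. meas lam v = w}"
    using Cs_bound u0_def u_in_K unfolding b_def w_def by (rule exists_optimal_recovery)
  let ?ustar = "u0 + (\<Sum>j\<in>UNIV. a $ j *\<^sub>R \<phi> j)"
  have \<Lambda>_nonneg: "0 \<le> \<Lambda>"
    using lam_bound by (rule lam_bound_nonneg)
  have l1_b: "l1_norm b \<le> ?m * \<Lambda>s"
    using Cs_bound u0_def lam_bound u_in_K unfolding b_def \<Lambda>s_def by (rule l1_norm_meas_model_class_le)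
  have "what - b = meas lam (u0 - u0hat) + \<eta>"
    using linear_meas[where lam=lam, OF lam_lin] unfolding what_def noise(1) w_def b_def
    by (simp add: linear_diff)
  then have l1_e: "l1_norm (what - b) \<le> ?m * \<Lambda> * \<epsilon>1 + ?m * \<kappa>"
    using l1_norm_data_error_le[OF lam_bound \<Lambda>_nonneg u0hat_err noise(2)] by simp
  have "norm (uhat - ?ustar)
      \<le> \<epsilon>1 + \<epsilon>2 * (M * (?m * \<Lambda>s)) + (C0 + \<epsilon>2) * ((M + \<delta>) * (?m * \<Lambda> * \<epsilon>1 + ?m * \<kappa>) + \<delta> * (?m * \<Lambda>s))"
    unfolding uhat_def
  proof (rule norm_perturbed_recovery_le[where G = "meas_matrix lam \<phi>" and Gh = "meas_matrix lam \<phi>hat"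
        and \<beta> = "\<Lambda> * \<epsilon>2" and b = b and e = "what - b"])
    show "\<bar>meas_matrix lam \<phi>hat $ i $ j - meas_matrix lam \<phi> $ i $ j\<bar> \<le> \<Lambda> * \<epsilon>2" for i j
      using lam_lin lam_bound \<Lambda>_nonneg \<phi>hat_err by (rule meas_matrix_perturbation_le)
  qed (use gram_invertible M_def tol1 \<delta>_def Ga ahat_solves l1_b l1_e u0hat_err \<phi>hat_err in
       \<open>simp_all add: mult.assoc C0_def\<close>)
  then show ?thesis
    using cheb tol2 norm_triangle_ineq4[of "u - ?ustar" "uhat - ?ustar"]
    by (simp add: algebra_simps)
qed

end
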